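(* For every integer $t\ge 0$ there is a constant $c_t$ such that every graph $G$ with $\mathrm{tww}(G)\le t$ satisfies $\alpha_2^*(G)\le c_t\,\alpha_2(G)$, where $\alpha_2(G)$ is the maximum size of a set of vertices of $G$ pairwise at distance at least $3$ in $G$, and $\alpha_2^*(G)$ is the optimum value of the linear program: maximize $\sum_{x\in V(G)}w(x)$ subject to $\sum_{y\in N[x]}w(y)\le 1$ for all $x\in V(G)$ and $0\le w(x)\le 1$ for all $x\in V(G)$.
   Context: $N[x]$ is the closed neighborhood of $x$ (its neighbors and $x$ itself). A trigraph $H$ consists of a vertex set $V(H)$ and two disjoint sets of unordered pairs of distinct vertices: black edges $E(H)$ and red edges $R(H)$. Two vertices are adjacent (neighbors) if they are joined by a black or a red edge. The red graph of $H$ is the graph $(V(H),R(H))$; $H$ is a $d$-trigraph if its red graph has maximum degree at most $d$. A graph is a trigraph with no red edges. Contracting two distinct vertices $u,v$ of a trigraph $H$ yields the trigraph obtained by deleting $u$ and $v$ and adding a new vertex $z$ such that, for every other vertex $x$: $zx$ is a black edge if both $ux$ and $vx$ are black edges; $zx$ is not an edge if $x$ is adjacent to neither $u$ nor $v$; and $zx$ is a red edge otherwise. All edges not incident to $u$ or $v$ are unchanged. A $d$-sequence of an $n$-vertex graph $G$ is a sequence of $d$-trigraphs $G=G_n,G_{n-1},\dots,G_1$ such that $G_1$ has a single vertex and each $G_{i-1}$ is obtained from $G_i$ by one contraction (so $G_i$ has $i$ vertices). The twin-width $\mathrm{tww}(G)$ of $G$ is the minimum $d$ such that $G$ admits a $d$-sequence.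 *)

theory Defs
  imports Complex_Main
begin

record trigraph =
  verts :: "nat set"
  black :: "nat set set"
  red   :: "nat set set"

definition pairs_of :: "nat set \<Rightarrow> nat set set" where
  "pairs_of V = {{x, y} | x y. x \<in> V \<and> y \<in> V \<and> x \<noteq> y}"

definition is_trigraph :: "trigraph \<Rightarrow> bool" where
  "is_trigraph H \<longleftrightarrow> finite (verts H) \<and> black H \<subseteq> pairs_of (verts H)
     \<and> red H \<subseteq> pairs_of (verts H) \<and> black H \<inter> red H = {}"

definition is_graph :: "trigraph \<Rightarrow> bool" where
  "is_graph G \<longleftrightarrow> is_trigraph G \<and> red G = {}"

definition adj :: "trigraph \<Rightarrow> nat \<Rightarrow> nat \<Rightarrow> bool" where
  "adj H x y \<longleftrightarrow> {x, y} \<in> black H \<union> red H"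

definition red_degree :: "trigraph \<Rightarrow> nat \<Rightarrow> nat" where
  "red_degree H x = card {y \<in> verts H. {x, y} \<in> red H}"

definition d_trigraph :: "nat \<Rightarrow> trigraph \<Rightarrow> bool" where
  "d_trigraph d H \<longleftrightarrow> (\<forall>x \<in> verts H. red_degree H x \<le> d)"

definition contract :: "trigraph \<Rightarrow> nat \<Rightarrow> nat \<Rightarrow> nat \<Rightarrow> trigraph" where
  "contract H u v z =
     (let W = verts H - {u, v} in
      \<lparr> verts = insert z W,
        black = {e \<in> black H. u \<notin> e \<and> v \<notin> e}
                \<union> {{z, x} | x. x \<in> W \<and> {u, x} \<in> black H \<and> {v, x} \<in> black H},
        red = {e \<in> red H. u \<notin> e \<and> v \<notin> e}
                \<union> {{z, x} | x. x \<in> W \<and> (adj H u x \<or> adj H v x)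
                        \<and> \<not> ({u, x} \<in> black H \<and> {v, x} \<in> black H)} \<rparr>)"

definition contracts_to :: "trigraph \<Rightarrow> trigraph \<Rightarrow> bool" where
  "contracts_to H H' \<longleftrightarrow> (\<exists>u v z. u \<in> verts H \<and> v \<in> verts H \<and> u \<noteq> v
       \<and> z \<notin> verts H \<and> H' = contract H u v z)"

text \<open>A d-sequence G = G_n, ..., G_1 of G, represented as the list [G_n, ..., G_1].\<close>
definition d_sequence :: "nat \<Rightarrow> trigraph \<Rightarrow> trigraph list \<Rightarrow> bool" where
  "d_sequence d G Gs \<longleftrightarrow> Gs \<noteq> [] \<and> hd Gs = G \<and> card (verts (last Gs)) = 1
     \<and> (\<forall>i. Suc i < length Gs \<longrightarrow> contracts_to (Gs ! i) (Gs ! Suc i))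
     \<and> (\<forall>H \<in> set Gs. d_trigraph d H)"

definition tww :: "trigraph \<Rightarrow> nat" where
  "tww G = (LEAST d. \<exists>Gs. d_sequence d G Gs)"

definition closed_nbhd :: "trigraph \<Rightarrow> nat \<Rightarrow> nat set" where
  "closed_nbhd G x = insert x {y \<in> verts G. adj G x y}"

text \<open>Distance at least 3 between vertices x and y (infinite distance allowed).\<close>
definition dist_ge3 :: "trigraph \<Rightarrow> nat \<Rightarrow> nat \<Rightarrow> bool" where
  "dist_ge3 G x y \<longleftrightarrow> x \<noteq> y \<and> \<not> adj G x y \<and> \<not> (\<exists>z \<in> verts G. adj G x z \<and> adj G z y)"

definition alpha2 :: "trigraph \<Rightarrow> nat" where
  "alpha2 G = Max {card S | S. S \<subseteq> verts G
       \<and> (\<forall>x \<in> S. \<forall>y \<in> S. x \<noteq> y \<longrightarrow> dist_ge3 G x y)}"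

definition alpha2_feasible :: "trigraph \<Rightarrow> (nat \<Rightarrow> real) \<Rightarrow> bool" where
  "alpha2_feasible G w \<longleftrightarrow>
     (\<forall>x \<in> verts G. (\<Sum>y \<in> closed_nbhd G x. w y) \<le> 1)
     \<and> (\<forall>x \<in> verts G. 0 \<le> w x \<and> w x \<le> 1)"

definition alpha2_star :: "trigraph \<Rightarrow> real" where
  "alpha2_star G = Sup {(\<Sum>x \<in> verts G. w x) | w. alpha2_feasible G w}"

end

theory Submission
  imports Defs
begin

text \<open>
  Let \<open>w\<close> be a feasible fractional solution of positive weight.  Follow a \<open>t\<close>-sequence of \<open>G\<close>
  and keep track of the parts of \<open>V(G)\<close> represented by the current trigraph: a black edge means
  the two parts are completely joined, a non-edge that they are anticomplete.  The last trigraph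
  has a single part \<open>V(G)\<close>, so some part is heavy (weight \<open>> 1\<close>) after some contraction, and
  the first time this happens all parts weigh at most \<open>2\<close>.  No vertex is completely joined to a
  heavy part \<open>P\<close>, because its closed neighbourhood would weigh more than \<open>1\<close>; hence
  \<open>N[P]\<close> lies in \<open>P\<close> and its at most \<open>t\<close> red neighbour parts.  So every \<open>v \<in> P\<close> has a second
  neighbourhood \<open>N[N[v]]\<close> of weight bounded in terms of \<open>t\<close>.  Put \<open>v\<close> into the packing, delete
  \<open>N[N[v]]\<close> from the support of \<open>w\<close> and repeat.
\<close>

lemma finite_verts_if_graph: "is_graph G \<Longrightarrow> finite (verts G)"
  unfolding is_graph_def is_trigraph_def by blast

lemma adj_commute: "adj H x y \<longleftrightarrow> adj H y x"
  unfolding adj_def by (simp add: insert_commute)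

lemma dist_ge3_commute: "dist_ge3 G x y \<longleftrightarrow> dist_ge3 G y x"
  unfolding dist_ge3_def using adj_commute by metis

lemma closed_nbhd_subset: "x \<in> verts G \<Longrightarrow> closed_nbhd G x \<subseteq> verts G"
  unfolding closed_nbhd_def by auto

lemma mem_closed_nbhd_commute:
  "x \<in> verts G \<Longrightarrow> y \<in> verts G \<Longrightarrow> x \<in> closed_nbhd G y \<longleftrightarrow> y \<in> closed_nbhd G x"
  unfolding closed_nbhd_def using adj_commute by auto

definition nbhd_set :: "trigraph \<Rightarrow> nat set \<Rightarrow> nat set" where
  "nbhd_set G X = (\<Union>x\<in>X. closed_nbhd G x)"

definition ball2 :: "trigraph \<Rightarrow> nat \<Rightarrow> nat set" where
  "ball2 G v = nbhd_set G (closed_nbhd G v)"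

lemma closed_nbhd_subset_nbhd_set: "x \<in> X \<Longrightarrow> closed_nbhd G x \<subseteq> nbhd_set G X"
  unfolding nbhd_set_def by blast

lemma nbhd_set_mono: "X \<subseteq> Y \<Longrightarrow> nbhd_set G X \<subseteq> nbhd_set G Y"
  unfolding nbhd_set_def by blast

lemma nbhd_set_Un: "nbhd_set G (X \<union> Y) = nbhd_set G X \<union> nbhd_set G Y"
  unfolding nbhd_set_def by blast

lemma nbhd_set_UN: "nbhd_set G (\<Union>i \<in> I. X i) = (\<Union>i \<in> I. nbhd_set G (X i))"
  unfolding nbhd_set_def by blast

lemma nbhd_set_subset: "X \<subseteq> verts G \<Longrightarrow> nbhd_set G X \<subseteq> verts G"
  unfolding nbhd_set_def using closed_nbhd_subset by blast

lemma ball2_subset: "v \<in> verts G \<Longrightarrow> ball2 G v \<subseteq> verts G"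
  unfolding ball2_def by (intro nbhd_set_subset closed_nbhd_subset)

lemma center_in_ball2: "v \<in> ball2 G v"
  unfolding ball2_def nbhd_set_def closed_nbhd_def by auto

lemma dist_ge3_if_notin_ball2:
  assumes "s \<in> verts G" "s \<notin> ball2 G v"
  shows "dist_ge3 G v s"
  using assms center_in_ball2[of v G]
  unfolding dist_ge3_def ball2_def nbhd_set_def closed_nbhd_def by auto

lemma card_le_alpha2:
  assumes "is_graph G" "S \<subseteq> verts G" "pairwise (dist_ge3 G) S"
  shows "card S \<le> alpha2 G"
proof -
  have "{card S | S. S \<subseteq> verts G \<and> pairwise (dist_ge3 G) S} \<subseteq> card ` Pow (verts G)" by blast
  moreover have "finite (card ` Pow (verts G))" using finite_verts_if_graph[OF assms(1)] by simp
  ultimately have "finite {card S | S. S \<subseteq> verts G \<and> pairwise (dist_ge3 G) S}"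
    by (rule finite_subset)
  then show ?thesis
    unfolding alpha2_def pairwise_def[symmetric] using assms(2,3) by (intro Max_ge) blast+
qed

definition edges_in_verts :: "trigraph \<Rightarrow> bool" where
  "edges_in_verts H \<longleftrightarrow> (\<forall>e \<in> black H \<union> red H. e \<subseteq> verts H)"

lemma verts_contract: "verts (contract H u v z) = insert z (verts H - {u, v})"
  by (simp add: contract_def Let_def)

lemma edges_in_verts_contract:
  "edges_in_verts H \<Longrightarrow> edges_in_verts (contract H u v z)"
  unfolding edges_in_verts_def contract_def Let_def by auto

lemma black_contract_old_iff:
  assumes "z \<notin> verts H" "a \<in> verts H - {u, v}" "b \<in> verts H - {u, v}"
  shows "{a, b} \<in> black (contract H u v z) \<longleftrightarrow> {a, b} \<in> black H"
  using assms unfolding contract_def Let_def by (auto simp: doubleton_eq_iff)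

lemma adj_contract_old_iff:
  assumes "z \<notin> verts H" "a \<in> verts H - {u, v}" "b \<in> verts H - {u, v}"
  shows "adj (contract H u v z) a b \<longleftrightarrow> adj H a b"
  using assms unfolding contract_def Let_def adj_def by (auto simp: doubleton_eq_iff)

context
  fixes H :: trigraph and u v z :: nat
  assumes edges: "edges_in_verts H" and fresh: "z \<notin> verts H"
begin

lemma fresh_not_in_edges: "{z, a} \<notin> black H" "{z, a} \<notin> red H"
  using edges fresh unfolding edges_in_verts_def by blast+

lemma black_contract_new_iff:
  assumes "a \<in> verts H - {u, v}"
  shows "{z, a} \<in> black (contract H u v z) \<longleftrightarrow> {u, a} \<in> black H \<and> {v, a} \<in> black H"
  using assms fresh fresh_not_in_edges unfolding contract_def Let_def
  by (auto simp: doubleton_eq_iff)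

lemma adj_contract_new_iff:
  assumes "a \<in> verts H - {u, v}"
  shows "adj (contract H u v z) z a \<longleftrightarrow> adj H u a \<or> adj H v a"
  using assms fresh fresh_not_in_edges unfolding contract_def Let_def adj_def
  by (auto simp: doubleton_eq_iff)

end

subsection \<open>Partition models\<close>

text \<open>\<open>H\<close> is a quotient of \<open>G\<close> whose vertex \<open>a\<close> stands for the part \<open>P a\<close>; red edges carry no
  information.\<close>

definition partition_model :: "trigraph \<Rightarrow> trigraph \<Rightarrow> (nat \<Rightarrow> nat set) \<Rightarrow> bool" where
  "partition_model G H P \<longleftrightarrow> finite (verts H) \<and> edges_in_verts H
     \<and> (\<forall>a \<in> verts H. P a \<subseteq> verts G) \<and> verts G \<subseteq> (\<Union>a \<in> verts H. P a)
     \<and> (\<forall>a \<in> verts H. \<forall>b \<in> verts H. a \<noteq> b \<longrightarrow> {a, b} \<in> black H \<longrightarrow>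
          (\<forall>x \<in> P a. \<forall>y \<in> P b. adj G x y))
     \<and> (\<forall>a \<in> verts H. \<forall>b \<in> verts H. a \<noteq> b \<longrightarrow> \<not> adj H a b \<longrightarrow>
          (\<forall>x \<in> P a. \<forall>y \<in> P b. \<not> adj G x y))"

context
  fixes G H :: trigraph and P :: "nat \<Rightarrow> nat set"
  assumes model: "partition_model G H P"
begin

lemma partition_model_finite: "finite (verts H)"
  and partition_model_edges: "edges_in_verts H"
  using model by (simp_all add: partition_model_def)

lemma partition_model_part_subset: "a \<in> verts H \<Longrightarrow> P a \<subseteq> verts G"
  using model by (simp add: partition_model_def)

lemma partition_model_cover: "x \<in> verts G \<Longrightarrow> \<exists>a \<in> verts H. x \<in> P a"
  using model by (simp add: partition_model_def subset_iff)

lemma partition_model_black: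
  "\<lbrakk>a \<in> verts H; b \<in> verts H; a \<noteq> b; {a, b} \<in> black H; x \<in> P a; y \<in> P b\<rbrakk> \<Longrightarrow> adj G x y"
  using model by (simp add: partition_model_def)

lemma partition_model_nonadj:
  "\<lbrakk>a \<in> verts H; b \<in> verts H; a \<noteq> b; \<not> adj H a b; x \<in> P a; y \<in> P b\<rbrakk> \<Longrightarrow> \<not> adj G x y"
  using model by (simp add: partition_model_def)

end

lemma partition_model_graph:
  assumes "is_graph G"
  shows "partition_model G G (\<lambda>a. {a})"
proof -
  have "is_trigraph G" "red G = {}" using assms unfolding is_graph_def by auto
  then have "finite (verts G)" "edges_in_verts G"
    unfolding is_trigraph_def edges_in_verts_def pairs_of_def by auto
  then show ?thesis unfolding partition_model_def adj_def by simp
qed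

definition contract_origins :: "nat \<Rightarrow> nat \<Rightarrow> nat \<Rightarrow> nat \<Rightarrow> nat set" where
  "contract_origins u v z c = (if c = z then {u, v} else {c})"

lemma contract_edge_origins:
  assumes edges: "edges_in_verts H" and fresh: "z \<notin> verts H"
    and c: "c \<in> verts (contract H u v z)" and c': "c' \<in> verts (contract H u v z)" and "c \<noteq> c'"
    and d: "d \<in> contract_origins u v z c" and d': "d' \<in> contract_origins u v z c'"
  shows "d \<noteq> d' \<and> ({c, c'} \<in> black (contract H u v z) \<longrightarrow> {d, d'} \<in> black H)
    \<and> (\<not> adj (contract H u v z) c c' \<longrightarrow> \<not> adj H d d')"
proof -
  let ?H' = "contract H u v z" and ?W = "verts H - {u, v}"
  have new: "d \<noteq> a \<and> ({z, a} \<in> black ?H' \<longrightarrow> {d, a} \<in> black H)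
      \<and> (\<not> adj ?H' z a \<longrightarrow> \<not> adj H d a)" if "a \<in> ?W" "d \<in> {u, v}" for a d
    using that black_contract_new_iff[OF edges fresh] adj_contract_new_iff[OF edges fresh] by auto
  consider "c = z" "c' \<in> ?W" | "c' = z" "c \<in> ?W" | "c \<in> ?W" "c' \<in> ?W"
    using c c' \<open>c \<noteq> c'\<close> unfolding verts_contract by blast
  then show ?thesis
  proof cases
    case 1
    then have "d \<in> {u, v}" "d' = c'" using d d' fresh
      unfolding contract_origins_def by (auto split: if_splits)
    then show ?thesis using new[of c' d] 1 by auto
  next
    case 2
    then have "d = c" "d' \<in> {u, v}" using d d' fresh
      unfolding contract_origins_def by (auto split: if_splits)
    then show ?thesis using new[of c d'] 2 by (auto simp: insert_commute adj_commute)
  next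
    case 3
    then have "d = c" "d' = c'" using d d' fresh
      unfolding contract_origins_def by (auto split: if_splits)
    then show ?thesis using 3 \<open>c \<noteq> c'\<close>
      black_contract_old_iff[OF fresh] adj_contract_old_iff[OF fresh] by auto
  qed
qed

lemma partition_model_contract:
  assumes model: "partition_model G H P" and "u \<in> verts H" "v \<in> verts H"
    and fresh: "z \<notin> verts H"
  shows "partition_model G (contract H u v z) (P(z := P u \<union> P v))"
proof -
  let ?H' = "contract H u v z" and ?P' = "P(z := P u \<union> P v)"
  let ?origins = "contract_origins u v z"
  have edges: "edges_in_verts H" by (rule partition_model_edges[OF model])
  have origins_verts: "?origins c \<subseteq> verts H" if "c \<in> verts ?H'" for c
    using that \<open>u \<in> verts H\<close> \<open>v \<in> verts H\<close> unfolding contract_origins_def verts_contract by auto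
  have part_origins: "?P' c = (\<Union>d \<in> ?origins c. P d)" for c
    unfolding contract_origins_def by auto
  have cover: "verts G \<subseteq> (\<Union>c \<in> verts ?H'. ?P' c)"
  proof
    fix x assume "x \<in> verts G"
    then obtain d where "d \<in> verts H" "x \<in> P d" using partition_model_cover[OF model] by blast
    moreover have "d \<in> ?origins (if d \<in> {u, v} then z else d)"
      using \<open>d \<in> verts H\<close> fresh unfolding contract_origins_def by auto
    ultimately show "x \<in> (\<Union>c \<in> verts ?H'. ?P' c)"
      unfolding part_origins verts_contract by (auto split: if_splits)
  qed
  have edge_parts: "({c, c'} \<in> black ?H' \<longrightarrow> adj G x y) \<and> (\<not> adj ?H' c c' \<longrightarrow> \<not> adj G x y)"
    if cc': "c \<in> verts ?H'" "c' \<in> verts ?H'" "c \<noteq> c'" and "x \<in> ?P' c" "y \<in> ?P' c'"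
    for c c' x y
  proof -
    obtain d d' where dd': "d \<in> ?origins c" "d' \<in> ?origins c'" "x \<in> P d" "y \<in> P d'"
      using \<open>x \<in> ?P' c\<close> \<open>y \<in> ?P' c'\<close> unfolding part_origins by blast
    have "d \<in> verts H" "d' \<in> verts H" using dd' origins_verts cc' by auto
    with dd' contract_edge_origins[OF edges fresh cc', of d d'] show ?thesis
      using partition_model_black[OF model] partition_model_nonadj[OF model] by blast
  qed
  have "?P' c \<subseteq> verts G" if "c \<in> verts ?H'" for c
    using partition_model_part_subset[OF model] origins_verts[OF that] unfolding part_origins by blast
  moreover have "finite (verts ?H')"
    using partition_model_finite[OF model] unfolding verts_contract by simp
  ultimately show ?thesis
    using cover edge_parts edges_in_verts_contract[OF edges] unfolding partition_model_def by blast
qed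

lemma d_trigraph_card:
  assumes "finite (verts H)" "card (verts H) \<le> d"
  shows "d_trigraph d H"
proof -
  have "red_degree H x \<le> card (verts H)" for x
    unfolding red_degree_def using assms(1) by (intro card_mono) auto
  then show ?thesis unfolding d_trigraph_def using assms(2) le_trans by blast
qed

lemma d_sequence_Cons:
  assumes "contracts_to H H'" "d_trigraph d H" "d_sequence d H' Gs"
  shows "d_sequence d H (H # Gs)"
proof -
  have "contracts_to ((H # Gs) ! i) ((H # Gs) ! Suc i)" if "Suc i < length (H # Gs)" for i
  proof (cases i)
    case 0
    have "Gs ! 0 = H'" using assms(3) unfolding d_sequence_def by (metis hd_conv_nth)
    then show ?thesis using assms(1) 0 by simp
  next
    case (Suc j)
    then show ?thesis using assms(3) that by (simp add: d_sequence_def)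
  qed
  moreover have "Gs \<noteq> []" "card (verts (last Gs)) = 1" "\<forall>H' \<in> set Gs. d_trigraph d H'"
    using assms(3) by (simp_all add: d_sequence_def)
  ultimately show ?thesis using assms(2) unfolding d_sequence_def by simp
qed

lemma exists_d_sequence:
  assumes "finite (verts H)" "verts H \<noteq> {}" "card (verts H) \<le> d"
  shows "\<exists>Gs. d_sequence d H Gs"
  using assms
proof (induction "card (verts H)" arbitrary: H rule: less_induct)
  case less
  show ?case
  proof (cases "card (verts H) = 1")
    case True
    then show ?thesis using d_trigraph_card less.prems
      by (intro exI[of _ "[H]"]) (auto simp: d_sequence_def)
  next
    case False
    obtain u where u: "u \<in> verts H" using less.prems(2) by blast
    with False have "verts H \<noteq> {u}" by auto
    with u obtain v where uv: "u \<in> verts H" "v \<in> verts H" "u \<noteq> v" by blast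
    define z where "z = Suc (Max (verts H))"
    have fresh: "z \<notin> verts H" using Max_ge[OF less.prems(1)] unfolding z_def by fastforce
    let ?H' = "contract H u v z"
    have "2 \<le> card (verts H)"
      using uv less.prems(1) card_mono[of "verts H" "{u, v}"] by auto
    moreover have "card (verts ?H') = Suc (card (verts H) - 2)"
      using uv fresh less.prems(1) unfolding verts_contract by (simp add: card_Diff_subset)
    ultimately have card': "card (verts ?H') < card (verts H)" "card (verts ?H') \<le> d"
      using less.prems(3) by linarith+
    obtain Gs where "d_sequence d ?H' Gs"
      using less.hyps[OF card'(1)] card'(2) less.prems(1) by (auto simp: verts_contract)
    moreover have "contracts_to H ?H'" unfolding contracts_to_def using uv fresh by blast
    ultimately show ?thesis using d_trigraph_card less.prems by (blast intro: d_sequence_Cons)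
  qed
qed

lemma d_sequence_if_tww_le:
  assumes "is_graph G" "verts G \<noteq> {}" "tww G \<le> t"
  shows "\<exists>Gs. d_sequence t G Gs"
proof -
  have "\<exists>Gs. d_sequence (card (verts G)) G Gs"
    using finite_verts_if_graph[OF assms(1)] assms(2) by (rule exists_d_sequence) simp
  then have "\<exists>Gs. d_sequence (tww G) G Gs"
    unfolding tww_def using LeastI_ex[of "\<lambda>d. \<exists>Gs. d_sequence d G Gs"] by blast
  then obtain Gs where "d_sequence (tww G) G Gs" ..
  then have "d_sequence t G Gs"
    using assms(3) unfolding d_sequence_def d_trigraph_def by fastforce
  then show ?thesis ..
qed

locale fractional_packing =
  fixes G :: trigraph and w :: "nat \<Rightarrow> real"
  assumes finite_verts: "finite (verts G)"
    and weight_nonneg: "x \<in> verts G \<Longrightarrow> 0 \<le> w x"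
    and nbhd_weight_le_1: "x \<in> verts G \<Longrightarrow> sum w (closed_nbhd G x) \<le> 1"
begin

lemma sum_mono_verts: "X \<subseteq> Y \<Longrightarrow> Y \<subseteq> verts G \<Longrightarrow> sum w X \<le> sum w Y"
  by (rule sum_mono2) (use finite_verts finite_subset weight_nonneg in auto)

lemma sum_Un_le:
  assumes "X \<subseteq> verts G" "Y \<subseteq> verts G"
  shows "sum w (X \<union> Y) \<le> sum w X + sum w Y"
proof -
  have "finite X" "finite Y" using assms finite_verts finite_subset by auto
  moreover have "0 \<le> sum w (X \<inter> Y)" using assms weight_nonneg by (intro sum_nonneg) auto
  ultimately show ?thesis using sum_Un[of X Y w] by linarith
qed

lemma sum_UN_le:
  "finite I \<Longrightarrow> (\<And>i. i \<in> I \<Longrightarrow> X i \<subseteq> verts G) \<Longrightarrow>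
    sum w (\<Union>i \<in> I. X i) \<le> (\<Sum>i \<in> I. sum w (X i))"
proof (induction I rule: finite_induct)
  case (insert i I)
  have "sum w (\<Union>j \<in> insert i I. X j) \<le> sum w (X i) + sum w (\<Union>j \<in> I. X j)"
    using insert.prems by (auto intro: sum_Un_le)
  also have "\<dots> \<le> sum w (X i) + (\<Sum>j \<in> I. sum w (X j))" using insert by simp
  finally show ?case using insert by simp
qed simp

lemma weight_le_1: "x \<in> verts G \<Longrightarrow> w x \<le> 1"
  using sum_mono_verts[of "{x}" "closed_nbhd G x"] nbhd_weight_le_1[of x]
  by (auto simp: closed_nbhd_def closed_nbhd_subset)

lemma exists_pos_weight: "X \<subseteq> verts G \<Longrightarrow> 0 < sum w X \<Longrightarrow> \<exists>x \<in> X. 0 < w x"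
  using sum_nonpos[of X w] by force

lemma restrict_fractional_packing: "fractional_packing G (\<lambda>x. if x \<in> A then w x else 0)"
proof
  show "sum (\<lambda>x. if x \<in> A then w x else 0) (closed_nbhd G x) \<le> 1" if "x \<in> verts G" for x
    using sum_mono[of "closed_nbhd G x" "\<lambda>x. if x \<in> A then w x else 0" w] that
      nbhd_weight_le_1 weight_nonneg closed_nbhd_subset by fastforce
qed (use finite_verts weight_nonneg in auto)

end

lemma fractional_packing_if_feasible:
  "is_graph G \<Longrightarrow> alpha2_feasible G w \<Longrightarrow> fractional_packing G w"
  using finite_verts_if_graph unfolding alpha2_feasible_def fractional_packing_def by blast

subsection \<open>Heavy parts\<close>

definition red_nbrs :: "trigraph \<Rightarrow> nat \<Rightarrow> nat set" where
  "red_nbrs H a = {b \<in> verts H. {a, b} \<in> red H}"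

definition ball2_weight_bound :: "nat \<Rightarrow> real" where
  "ball2_weight_bound t = 2 + 2 * real t + real t * (3 + 2 * real t)"

lemma one_le_ball2_weight_bound: "1 \<le> ball2_weight_bound t"
  unfolding ball2_weight_bound_def using mult_nonneg_nonneg[of "real t" "3 + 2 * real t"] by simp

context fractional_packing
begin

context
  fixes H :: trigraph and P :: "nat \<Rightarrow> nat set" and t :: nat
  assumes model: "partition_model G H P" and red_degree_le: "d_trigraph t H"
    and part_weight_le_2: "\<And>a. a \<in> verts H \<Longrightarrow> sum w (P a) \<le> 2"
begin

lemma nbhd_part_cases:
  assumes a: "a \<in> verts H" and y: "y \<in> nbhd_set G (P a)"
  shows "y \<in> P a \<union> (\<Union>b \<in> red_nbrs H a. P b) \<or> P a \<subseteq> closed_nbhd G y"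
proof -
  obtain x where x: "x \<in> P a" "y \<in> closed_nbhd G x" using y unfolding nbhd_set_def by blast
  show ?thesis
  proof (cases "y = x")
    case False
    then have xy: "adj G x y" and "y \<in> verts G" using x(2) unfolding closed_nbhd_def by auto
    then obtain b where b: "b \<in> verts H" "y \<in> P b" using partition_model_cover[OF model] by blast
    consider "b = a" | "b \<noteq> a" "{a, b} \<in> black H" | "b \<noteq> a" "{a, b} \<in> red H"
      using partition_model_nonadj[OF model a b(1) _ _ x(1) b(2)] xy unfolding adj_def by blast
    then show ?thesis
    proof cases
      case 2
      then have "adj G y x'" if "x' \<in> P a" for x'
        using partition_model_black[OF model a b(1) _ _ that b(2)] adj_commute by metis
      then show ?thesis
        using partition_model_part_subset[OF model a] unfolding closed_nbhd_def by blast
    next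
      case 3
      then show ?thesis using b unfolding red_nbrs_def by blast
    qed (use b in blast)
  qed (use x in blast)
qed

lemma red_nbrs_finite: "finite (red_nbrs H a)"
  and red_nbrs_subset: "red_nbrs H a \<subseteq> verts H"
  using partition_model_finite[OF model] unfolding red_nbrs_def by auto

lemma card_red_nbrs_le: "a \<in> verts H \<Longrightarrow> card (red_nbrs H a) \<le> t"
  using red_degree_le unfolding d_trigraph_def red_degree_def red_nbrs_def by blast

lemma red_parts_subset: "(\<Union>b \<in> red_nbrs H a. P b) \<subseteq> verts G"
  using partition_model_part_subset[OF model] red_nbrs_subset by blast

lemma weight_red_parts_le:
  assumes a: "a \<in> verts H"
  shows "sum w (\<Union>b \<in> red_nbrs H a. P b) \<le> 2 * real t"
proof -
  have "sum w (\<Union>b \<in> red_nbrs H a. P b) \<le> (\<Sum>b \<in> red_nbrs H a. sum w (P b))"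
    using partition_model_part_subset[OF model] red_nbrs_subset by (intro sum_UN_le red_nbrs_finite) auto
  also have "\<dots> \<le> real (card (red_nbrs H a)) * 2"
    using red_nbrs_subset part_weight_le_2 by (intro sum_bounded_above) auto
  also have "\<dots> \<le> 2 * real t" using card_red_nbrs_le[OF a] by simp
  finally show ?thesis .
qed

lemma weight_nbhd_part_le:
  assumes a: "a \<in> verts H"
  shows "sum w (nbhd_set G (P a)) \<le> 3 + 2 * real t"
proof (cases "P a = {}")
  case False
  then obtain x where x: "x \<in> P a" by blast
  let ?R = "\<Union>b \<in> red_nbrs H a. P b"
  have Pa: "P a \<subseteq> verts G" by (rule partition_model_part_subset[OF model a])
  have x_nbhd: "closed_nbhd G x \<subseteq> verts G" using Pa x closed_nbhd_subset by blast
  have "nbhd_set G (P a) \<subseteq> (P a \<union> ?R) \<union> closed_nbhd G x"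
  proof
    fix y assume y: "y \<in> nbhd_set G (P a)"
    then have "y \<in> verts G" using nbhd_set_subset[OF Pa] by blast
    then have "y \<in> closed_nbhd G x" if "P a \<subseteq> closed_nbhd G y"
      using that x Pa mem_closed_nbhd_commute by blast
    then show "y \<in> (P a \<union> ?R) \<union> closed_nbhd G x" using nbhd_part_cases[OF a y] by blast
  qed
  then have "sum w (nbhd_set G (P a)) \<le> sum w ((P a \<union> ?R) \<union> closed_nbhd G x)"
    using Pa red_parts_subset x_nbhd by (intro sum_mono_verts) auto
  also have "\<dots> \<le> sum w (P a \<union> ?R) + sum w (closed_nbhd G x)"
    using Pa red_parts_subset x_nbhd by (intro sum_Un_le) auto
  also have "\<dots> \<le> sum w (P a) + sum w ?R + sum w (closed_nbhd G x)"
    using sum_Un_le[OF Pa red_parts_subset] by simp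
  also have "\<dots> \<le> 3 + 2 * real t"
    using part_weight_le_2[OF a] weight_red_parts_le[OF a] nbhd_weight_le_1[of x] x Pa by auto
  finally show ?thesis .
qed (simp add: nbhd_set_def)

lemma nbhd_heavy_part_subset:
  assumes a: "a \<in> verts H" and heavy: "1 < sum w (P a)"
  shows "nbhd_set G (P a) \<subseteq> P a \<union> (\<Union>b \<in> red_nbrs H a. P b)"
proof
  fix y assume y: "y \<in> nbhd_set G (P a)"
  have "y \<in> verts G"
    using y nbhd_set_subset partition_model_part_subset[OF model a] by blast
  have "\<not> P a \<subseteq> closed_nbhd G y"
  proof
    assume "P a \<subseteq> closed_nbhd G y"
    then have "sum w (P a) \<le> sum w (closed_nbhd G y)"
      using closed_nbhd_subset[OF \<open>y \<in> verts G\<close>] by (rule sum_mono_verts)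
    with nbhd_weight_le_1[OF \<open>y \<in> verts G\<close>] heavy show False by linarith
  qed
  then show "y \<in> P a \<union> (\<Union>b \<in> red_nbrs H a. P b)" using nbhd_part_cases[OF a y] by blast
qed

lemma weight_ball2_heavy_part_le:
  assumes a: "a \<in> verts H" and heavy: "1 < sum w (P a)" and v: "v \<in> P a"
  shows "sum w (ball2 G v) \<le> ball2_weight_bound t"
proof -
  let ?R = "\<Union>b \<in> red_nbrs H a. P b" and ?NR = "\<Union>b \<in> red_nbrs H a. nbhd_set G (P b)"
  have Pa: "P a \<subseteq> verts G" by (rule partition_model_part_subset[OF model a])
  have red_nbhd: "nbhd_set G (P b) \<subseteq> verts G" if "b \<in> red_nbrs H a" for b
    using that red_nbrs_subset by (intro nbhd_set_subset partition_model_part_subset[OF model]) blast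
  then have NR: "?NR \<subseteq> verts G" by blast
  have "closed_nbhd G v \<subseteq> P a \<union> ?R"
    using closed_nbhd_subset_nbhd_set[OF v] nbhd_heavy_part_subset[OF a heavy] by (rule order_trans)
  then have "ball2 G v \<subseteq> nbhd_set G (P a) \<union> ?NR"
    unfolding ball2_def by (metis nbhd_set_mono nbhd_set_Un nbhd_set_UN)
  then have "ball2 G v \<subseteq> (P a \<union> ?R) \<union> ?NR"
    using nbhd_heavy_part_subset[OF a heavy] by blast
  then have "sum w (ball2 G v) \<le> sum w ((P a \<union> ?R) \<union> ?NR)"
    using Pa red_parts_subset NR by (intro sum_mono_verts) auto
  also have "\<dots> \<le> sum w (P a \<union> ?R) + sum w ?NR"
    using Pa red_parts_subset NR by (intro sum_Un_le) auto
  also have "\<dots> \<le> sum w (P a) + sum w ?R + sum w ?NR"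
    using sum_Un_le[OF Pa red_parts_subset] by simp
  also have "sum w ?NR \<le> (\<Sum>b \<in> red_nbrs H a. sum w (nbhd_set G (P b)))"
    using red_nbhd by (rule sum_UN_le[OF red_nbrs_finite])
  also have "\<dots> \<le> real (card (red_nbrs H a)) * (3 + 2 * real t)"
    using red_nbrs_subset weight_nbhd_part_le by (intro sum_bounded_above) (meson subsetD)
  also have "\<dots> \<le> real t * (3 + 2 * real t)"
    using card_red_nbrs_le[OF a] by (intro mult_right_mono) auto
  finally show ?thesis
    using part_weight_le_2[OF a] weight_red_parts_le[OF a] unfolding ball2_weight_bound_def by linarith
qed

end

end

context fractional_packing
begin

definition light_ball2 :: "nat \<Rightarrow> nat \<Rightarrow> bool" where
  "light_ball2 t v \<longleftrightarrow> v \<in> verts G \<and> 0 < w v \<and> sum w (ball2 G v) \<le> ball2_weight_bound t"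

definition light_model :: "trigraph \<Rightarrow> bool" where
  "light_model H \<longleftrightarrow> (\<exists>P. partition_model G H P \<and> (\<forall>a \<in> verts H. sum w (P a) \<le> 1))"

lemma light_model_graph: "is_graph G \<Longrightarrow> light_model G"
  unfolding light_model_def using partition_model_graph weight_le_1
  by (intro exI[of _ "\<lambda>a. {a}"]) simp

lemma light_model_contract:
  assumes "light_model H" and contr: "contracts_to H H'" and red_degree_le: "d_trigraph t H'"
  shows "light_model H' \<or> (\<exists>v. light_ball2 t v)"
proof (rule disjCI)
  assume no_light_ball2: "\<not> (\<exists>v. light_ball2 t v)"
  obtain P where model: "partition_model G H P" and light: "\<And>a. a \<in> verts H \<Longrightarrow> sum w (P a) \<le> 1"
    using \<open>light_model H\<close> unfolding light_model_def by blast
  obtain u v z where uv: "u \<in> verts H" "v \<in> verts H" and fresh: "z \<notin> verts H"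
    and H': "H' = contract H u v z"
    using contr unfolding contracts_to_def by blast
  let ?P' = "P(z := P u \<union> P v)"
  have model': "partition_model G H' ?P'"
    unfolding H' using partition_model_contract[OF model uv fresh] .
  have parts_le_2: "sum w (?P' a) \<le> 2" if "a \<in> verts H'" for a
  proof (cases "a = z")
    case True
    have "sum w (P u \<union> P v) \<le> sum w (P u) + sum w (P v)"
      using uv by (intro sum_Un_le partition_model_part_subset[OF model])
    with light[OF uv(1)] light[OF uv(2)] show ?thesis unfolding True fun_upd_same by linarith
  next
    case False
    then have "a \<in> verts H" using that unfolding H' verts_contract by blast
    with light[of a] False show ?thesis by simp
  qed
  have weight_ball2_le: "sum w (ball2 G x) \<le> ball2_weight_bound t"
    if "a \<in> verts H'" "1 < sum w (?P' a)" "x \<in> ?P' a" for a x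
    by (rule weight_ball2_heavy_part_le[OF model' red_degree_le _ that]) (erule parts_le_2)
  have "sum w (?P' a) \<le> 1" if a: "a \<in> verts H'" for a
  proof (rule ccontr)
    assume "\<not> sum w (?P' a) \<le> 1"
    then have heavy: "1 < sum w (?P' a)" by simp
    have part: "?P' a \<subseteq> verts G" by (rule partition_model_part_subset[OF model' a])
    moreover have "0 < sum w (?P' a)" using heavy by simp
    ultimately obtain x where x: "x \<in> ?P' a" "0 < w x" by (blast dest: exists_pos_weight)
    have "light_ball2 t x"
      unfolding light_ball2_def using x part weight_ball2_le[OF a heavy x(1)] by blast
    with no_light_ball2 show False by blast
  qed
  with model' show "light_model H'" unfolding light_model_def by blast
qed

lemma weight_le_1_if_light_model_singleton:
  assumes "light_model H" "card (verts H) = 1"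
  shows "sum w (verts G) \<le> 1"
proof -
  obtain P where model: "partition_model G H P" and light: "\<forall>a \<in> verts H. sum w (P a) \<le> 1"
    using assms(1) unfolding light_model_def by blast
  obtain a where a: "verts H = {a}" using assms(2) by (rule card_1_singletonE)
  have "verts G \<subseteq> P a" using partition_model_cover[OF model] unfolding a by blast
  then have "verts G = P a" using partition_model_part_subset[OF model] unfolding a by blast
  then show ?thesis using light a by simp
qed

lemma exists_light_ball2:
  assumes graph: "is_graph G" and seq: "d_sequence t G Gs" and pos: "0 < sum w (verts G)"
  shows "\<exists>v. light_ball2 t v"
proof (rule ccontr)
  assume no_light_ball2: "\<not> (\<exists>v. light_ball2 t v)"
  have "light_model (Gs ! i)" if "i < length Gs" for i
    using that
  proof (induction i)
    case 0
    have "Gs ! 0 = G" using seq unfolding d_sequence_def by (metis hd_conv_nth)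
    then show ?case using light_model_graph[OF graph] by simp
  next
    case (Suc i)
    have "contracts_to (Gs ! i) (Gs ! Suc i)" "d_trigraph t (Gs ! Suc i)"
      using seq Suc.prems unfolding d_sequence_def by simp_all
    with Suc light_model_contract no_light_ball2 show ?case by (meson Suc_lessD)
  qed
  moreover have "Gs ! (length Gs - 1) = last Gs" "length Gs - 1 < length Gs"
    using seq unfolding d_sequence_def by (simp_all add: last_conv_nth)
  ultimately have "light_model (last Gs)" by metis
  moreover have "card (verts (last Gs)) = 1" using seq unfolding d_sequence_def by blast
  ultimately have "sum w (verts G) \<le> 1" by (rule weight_le_1_if_light_model_singleton)
  moreover obtain v where v: "v \<in> verts G" "0 < w v" using exists_pos_weight[OF _ pos] by blast
  moreover have "sum w (ball2 G v) \<le> sum w (verts G)" using ball2_subset[OF v(1)] by (rule sum_mono_verts) simp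
  ultimately have "light_ball2 t v"
    using one_le_ball2_weight_bound[of t] unfolding light_ball2_def by simp
  with no_light_ball2 show False by blast
qed

end

subsection \<open>The greedy packing\<close>

context fractional_packing
begin

lemma exists_light_ball2_within:
  assumes graph: "is_graph G" and tww: "tww G \<le> t" and A: "A \<subseteq> verts G" and pos: "0 < sum w A"
  shows "\<exists>v \<in> A. sum w (ball2 G v \<inter> A) \<le> ball2_weight_bound t"
proof -
  define wA where "wA x = (if x \<in> A then w x else 0)" for x
  interpret A: fractional_packing G wA
    unfolding wA_def by (rule restrict_fractional_packing)
  have restrict: "sum wA B = sum w (B \<inter> A)" if "finite B" for B
    unfolding wA_def using sum.inter_restrict[OF that, of w A] by simp
  have "sum wA (verts G) = sum w A"
    using restrict[OF finite_verts] A by (simp add: Int_absorb1)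
  have "verts G \<noteq> {}" using pos A by auto
  then obtain Gs where "d_sequence t G Gs" using d_sequence_if_tww_le[OF graph _ tww] by blast
  then obtain v where "A.light_ball2 t v"
    using A.exists_light_ball2[OF graph] pos \<open>sum wA (verts G) = sum w A\<close> by auto
  then have v: "v \<in> verts G" "0 < wA v" and "sum wA (ball2 G v) \<le> ball2_weight_bound t"
    unfolding A.light_ball2_def by blast+
  then have "sum w (ball2 G v \<inter> A) \<le> ball2_weight_bound t"
    using restrict[OF finite_subset[OF ball2_subset[OF v(1)] finite_verts]] by simp
  moreover have "v \<in> A" using v(2) unfolding wA_def by (auto split: if_splits)
  ultimately show ?thesis by blast
qed

lemma exists_dist3_set_weight_le:
  assumes graph: "is_graph G" and tww: "tww G \<le> t" and "A \<subseteq> verts G"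
  shows "\<exists>S \<subseteq> A. pairwise (dist_ge3 G) S \<and> sum w A \<le> ball2_weight_bound t * real (card S)"
  using \<open>A \<subseteq> verts G\<close>
proof (induction "card A" arbitrary: A rule: less_induct)
  case less
  have finite_A: "finite A" using less.prems finite_verts finite_subset by blast
  show ?case
  proof (cases "0 < sum w A")
    case False
    then show ?thesis by (intro exI[of _ "{}"]) auto
  next
    case True
    then obtain v where "v \<in> A" and light: "sum w (ball2 G v \<inter> A) \<le> ball2_weight_bound t"
      using exists_light_ball2_within[OF graph tww less.prems] by blast
    have "card (A - ball2 G v) < card A"
      using finite_A \<open>v \<in> A\<close> center_in_ball2[of v G] by (intro psubset_card_mono) auto
    then obtain S where S: "S \<subseteq> A - ball2 G v" "pairwise (dist_ge3 G) S"
      "sum w (A - ball2 G v) \<le> ball2_weight_bound t * real (card S)"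
      using less.hyps less.prems by blast
    have "finite S" "v \<notin> S" using S(1) finite_A finite_subset center_in_ball2[of v G] by auto
    moreover have "dist_ge3 G v s" if "s \<in> S" for s
      using that S(1) less.prems by (intro dist_ge3_if_notin_ball2) auto
    then have "pairwise (dist_ge3 G) (insert v S)"
      using S(2) dist_ge3_commute by (auto simp: pairwise_insert)
    moreover have "sum w A = sum w (A \<inter> ball2 G v) + sum w (A - ball2 G v)"
      by (rule sum.Int_Diff[OF finite_A])
    ultimately show ?thesis using S light \<open>v \<in> A\<close>
      by (intro exI[of _ "insert v S"]) (auto simp: Int_commute algebra_simps)
  qed
qed

lemma weight_le_alpha2:
  assumes "is_graph G" "tww G \<le> t"
  shows "sum w (verts G) \<le> ball2_weight_bound t * real (alpha2 G)"
proof -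
  obtain S where S: "S \<subseteq> verts G" "pairwise (dist_ge3 G) S"
    and "sum w (verts G) \<le> ball2_weight_bound t * real (card S)"
    using exists_dist3_set_weight_le[OF assms] by blast
  note this(3)
  also have "ball2_weight_bound t * real (card S) \<le> ball2_weight_bound t * real (alpha2 G)"
    using card_le_alpha2[OF assms(1) S] one_le_ball2_weight_bound[of t] by (intro mult_left_mono) auto
  finally show ?thesis .
qed

end

theorem mainTheorem15:
  fixes t :: nat
  shows "\<exists>c :: real. \<forall>G. is_graph G \<and> tww G \<le> t \<longrightarrow>
           alpha2_star G \<le> c * real (alpha2 G)"
proof (intro exI allI impI)
  fix G assume "is_graph G \<and> tww G \<le> t"
  then have "sum w (verts G) \<le> ball2_weight_bound t * real (alpha2 G)" if "alpha2_feasible G w" for w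
    using fractional_packing.weight_le_alpha2 fractional_packing_if_feasible that by blast
  moreover have "alpha2_feasible G (\<lambda>_. 0)" unfolding alpha2_feasible_def by simp
  ultimately show "alpha2_star G \<le> ball2_weight_bound t * real (alpha2 G)"
    unfolding alpha2_star_def by (intro cSup_least) auto
qed

end
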